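(* Let $s>0$, $\gamma\ge0$, $u>0$, and $\nu_0,\nu_1\ge0$ with $\nu_0+\nu_1=1$. Let $(\mathscr T(t))_{t\ge0}$ be the stratified ASG process, and let $y(\cdot;y_0)$ solve $$\dot y=-y(1-y)[s+\gamma(1-y)]+u\nu_1(1-y)-u\nu_0y,\qquad y(0)=y_0 .$$ Then $$\mathcal H\big(\mathcal T,y(t;y_0)\big)=\mathbb E_{\mathcal T}\big[\mathcal H(\mathscr T(t),y_0)\big]\qquad\text{for all } y_0\in[0,1],\ \mathcal T\in\Upsilon_\Delta,\ t\ge0.$$ In particular, $y(t;y_0)=\mathbb E_{[1]}\big[\mathcal H(\mathscr T(t),y_0)\big]$ for all $t\ge0$ and $y_0\in[0,1]$.
   Context: A weighted ternary tree is a pair $(\tau,m)$. Here $\tau$ is a finite rooted tree in which every internal vertex has exactly three children, labelled left, middle and right (a single vertex is allowed). The map $m$ assigns a weight in $\mathbb N_0$ to each leaf. $\Upsilon$ is the set of weighted ternary trees, $\Delta$ is an extra cemetery state, and $\Upsilon_\Delta=\Upsilon\cup\{\Delta\}$. $[n]$ denotes the tree consisting of a single vertex of weight $n$. For $\mathcal T=(\tau,m)\in\Upsilon$ and a leaf $\ell$, define four operations: - ($\mathcal T^\ell_{\rm bin}$) Increase $m(\ell)$ by 1. - ($\mathcal T^\ell_{\rm ter}$) Attach three children to $\ell$. The left child gets weight $m(\ell)$, and the middle and right children get weight 1. - ($\mathcal T^\ell_\times$) If $m(\ell)>1$, or $\ell$ is the root, or $m(\ell)=1$ and $\ell$ is a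 left child, decrease $m(\ell)$ by 1. If $m(\ell)=1$ and $\ell$ is a middle or right child, proceed as follows. Let $b_\ell$ be the closest strict ancestor of $\ell$ that is either the root, or a left child, or has a left child whose subtree has positive total weight. Then replace the subtree rooted at $b_\ell$ by the subtree rooted at the left child of $b_\ell$, keeping all weights. - ($\mathcal T^\ell_\circ$) Let $\mu^\star$ be the first vertex on the path from $\ell$ to the root (starting with $\ell$) that is not a left child; the root counts as such a vertex. If $\mu^\star$ is the root, the result is $\Delta$. Otherwise, let $p$ be the parent of $\mu^\star$, and let $v,w$ be the other two children of $p$, with $v$ to the left of $w$. Remove the subtree rooted at $\mu^\star$. Replace the leftmost leaf $\ell_v$ of the subtree at $v$ by the whole subtree at $w$, giving the leftmost leaf of the latter the weight $m(\ell_v)+m(\ell_w)$, where $\ell_w$ is the leftmost leaf of the subtree at $w$. Finally, replace the subtree at $p$ by the resulting subtree at $v$. The stratified ASG process $\mathscr T$ is the continuous-time Markov chain on $\Upsilon_\Delta$ which, from $(\tau,m)$, jumps for each leaf $\ell$ to $\mathcal T^\ell_{\rm bin}$ at rate $s\,m(\ell)$, to $\mathcal T^\ell_{\rm ter}$ at rate $\gamma\,m(\ell)$, to $\mathcal T^\ell_\times$ at rate $u\nu_1 m(\ell)$, and to $\mathcal T^\ell_\circ$ at rate $u\nu_0 m(\ell)$. The states $[0]$ and $\Delta$ are absorbing. For $\mathcal T=(\tau,m)\in\Upsilon$ and $y_0\in[0,1]$, $\mathcal H(\mathcal T,y_0)$ is the probability that the root gets type 1. Here each leaf $\ell$ independently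 gets type 1 with probability $y_0^{m(\ell)}$ (with $y_0^0=1$) and type 0 otherwise, and an internal vertex has type 1 iff its left child has type 1 and at least one of its middle and right children has type 1. Also $\mathcal H(\Delta,y_0)=0$. *)

theory Defs
  imports "HOL-Analysis.Analysis"
begin

datatype dir = DL | DM | DR

datatype wtree = Leaf nat | Node wtree wtree wtree

text \<open>States of the process: Some T for a tree T, None for the cemetery state Delta.\<close>
type_synonym state = "wtree option"

fun subtree :: "wtree \<Rightarrow> dir list \<Rightarrow> wtree" where
  "subtree T [] = T"
| "subtree (Node a b c) (DL # p) = subtree a p"
| "subtree (Node a b c) (DM # p) = subtree b p"
| "subtree (Node a b c) (DR # p) = subtree c p"
| "subtree (Leaf n) (d # p) = Leaf n"

fun replace_at :: "dir list \<Rightarrow> wtree \<Rightarrow> wtree \<Rightarrow> wtree" where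
  "replace_at [] S T = S"
| "replace_at (DL # p) S (Node a b c) = Node (replace_at p S a) b c"
| "replace_at (DM # p) S (Node a b c) = Node a (replace_at p S b) c"
| "replace_at (DR # p) S (Node a b c) = Node a b (replace_at p S c)"
| "replace_at (d # p) S (Leaf n) = Leaf n"

fun leaf_paths :: "wtree \<Rightarrow> dir list list" where
  "leaf_paths (Leaf n) = [[]]"
| "leaf_paths (Node a b c) =
     map ((#) DL) (leaf_paths a) @ map ((#) DM) (leaf_paths b) @ map ((#) DR) (leaf_paths c)"

fun leaf_weights :: "wtree \<Rightarrow> nat list" where
  "leaf_weights (Leaf n) = [n]"
| "leaf_weights (Node a b c) = leaf_weights a @ leaf_weights b @ leaf_weights c"

fun nleaves :: "wtree \<Rightarrow> nat" where
  "nleaves (Leaf n) = 1"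
| "nleaves (Node a b c) = nleaves a + nleaves b + nleaves c"

fun total_weight :: "wtree \<Rightarrow> nat" where
  "total_weight (Leaf n) = n"
| "total_weight (Node a b c) = total_weight a + total_weight b + total_weight c"

definition weight_at :: "wtree \<Rightarrow> dir list \<Rightarrow> nat" where
  "weight_at T p = (case subtree T p of Leaf n \<Rightarrow> n | Node _ _ _ \<Rightarrow> 0)"

definition op_bin :: "wtree \<Rightarrow> dir list \<Rightarrow> wtree" where
  "op_bin T p = replace_at p (Leaf (weight_at T p + 1)) T"

definition op_ter :: "wtree \<Rightarrow> dir list \<Rightarrow> wtree" where
  "op_ter T p = replace_at p (Node (Leaf (weight_at T p)) (Leaf 1) (Leaf 1)) T"

definition anc_ok :: "wtree \<Rightarrow> dir list \<Rightarrow> bool" where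
  "anc_ok T q \<longleftrightarrow> q = [] \<or> last q = DL \<or> 0 < total_weight (subtree T (q @ [DL]))"

text \<open>For weight 0 at a non-root leaf the operation is not specified in the paper; it is
  never used (rate 0). We let it act as the (saturating) decrement, i.e. identity.\<close>
definition op_times :: "wtree \<Rightarrow> dir list \<Rightarrow> wtree" where
  "op_times T p =
    (let m = weight_at T p in
     if m \<noteq> 1 \<or> p = [] \<or> last p = DL then replace_at p (Leaf (m - 1)) T
     else (let k = (GREATEST k. k < length p \<and> anc_ok T (take k p));
               b = take k p
           in replace_at b (subtree T (b @ [DL])) T))"

fun add_leftmost :: "nat \<Rightarrow> wtree \<Rightarrow> wtree" where
  "add_leftmost n (Leaf k) = Leaf (n + k)"
| "add_leftmost n (Node a b c) = Node (add_leftmost n a) b c"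

fun graft :: "wtree \<Rightarrow> wtree \<Rightarrow> wtree" where
  "graft (Leaf n) W = add_leftmost n W"
| "graft (Node a b c) W = Node (graft a W) b c"

definition op_circ :: "wtree \<Rightarrow> dir list \<Rightarrow> state" where
  "op_circ T p =
    (let k = (GREATEST k. k \<le> length p \<and> (k = 0 \<or> last (take k p) \<noteq> DL)) in
     if k = 0 then None
     else (let par = take (k - 1) p; d = p ! (k - 1);
               Tv = subtree T (par @ [DL]);
               Tw = subtree T (par @ [if d = DM then DR else DM])
           in Some (replace_at par (graft Tv Tw) T)))"

fun transitions :: "real \<Rightarrow> real \<Rightarrow> real \<Rightarrow> real \<Rightarrow> real \<Rightarrow> state \<Rightarrow> (real \<times> state) list" where
  "transitions s \<gamma> u \<nu>0 \<nu>1 None = []"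
| "transitions s \<gamma> u \<nu>0 \<nu>1 (Some T) =
     concat (map (\<lambda>p. let m = real (weight_at T p) in
        [(s * m, Some (op_bin T p)), (\<gamma> * m, Some (op_ter T p)),
         (u * \<nu>1 * m, Some (op_times T p)), (u * \<nu>0 * m, op_circ T p)]) (leaf_paths T))"

definition total_rate :: "real \<Rightarrow> real \<Rightarrow> real \<Rightarrow> real \<Rightarrow> real \<Rightarrow> state \<Rightarrow> real" where
  "total_rate s \<gamma> u \<nu>0 \<nu>1 X = sum_list (map fst (transitions s \<gamma> u \<nu>0 \<nu>1 X))"

text \<open>jump_part n g t X = E_X[ g(X_t) ; exactly n jumps up to time t ], defined via the
  first-jump decomposition of the (minimal) continuous-time Markov chain.\<close>
fun jump_part :: "real \<Rightarrow> real \<Rightarrow> real \<Rightarrow> real \<Rightarrow> real \<Rightarrow> nat \<Rightarrow> (state \<Rightarrow> real) \<Rightarrow> real \<Rightarrow> state \<Rightarrow> real" where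
  "jump_part s \<gamma> u \<nu>0 \<nu>1 0 g t X = exp (- total_rate s \<gamma> u \<nu>0 \<nu>1 X * t) * g X"
| "jump_part s \<gamma> u \<nu>0 \<nu>1 (Suc n) g t X =
     integral {0..t} (\<lambda>r. exp (- total_rate s \<gamma> u \<nu>0 \<nu>1 X * r) *
        sum_list (map (\<lambda>(a, Y). a * jump_part s \<gamma> u \<nu>0 \<nu>1 n g (t - r) Y)
                      (transitions s \<gamma> u \<nu>0 \<nu>1 X)))"

definition expect :: "real \<Rightarrow> real \<Rightarrow> real \<Rightarrow> real \<Rightarrow> real \<Rightarrow> (state \<Rightarrow> real) \<Rightarrow> real \<Rightarrow> state \<Rightarrow> real" where
  "expect s \<gamma> u \<nu>0 \<nu>1 g t X = (\<Sum>n. jump_part s \<gamma> u \<nu>0 \<nu>1 n g t X)"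

text \<open>Type of the root given the types of the leaves (left to right).\<close>
fun eval_type :: "wtree \<Rightarrow> bool list \<Rightarrow> bool" where
  "eval_type (Leaf n) bs = hd bs"
| "eval_type (Node a b c) bs =
     (eval_type a (take (nleaves a) bs) \<and>
      (eval_type b (take (nleaves b) (drop (nleaves a) bs)) \<or>
       eval_type c (drop (nleaves a + nleaves b) bs)))"

definition H_tree :: "wtree \<Rightarrow> real \<Rightarrow> real" where
  "H_tree T y0 =
    (\<Sum>bs\<in>{bs. length bs = nleaves T}.
       if eval_type T bs
       then (\<Prod>i<nleaves T. if bs ! i then y0 ^ (leaf_weights T ! i)
                                       else 1 - y0 ^ (leaf_weights T ! i))
       else 0)"

fun H :: "state \<Rightarrow> real \<Rightarrow> real" where
  "H None y0 = 0"
| "H (Some T) y0 = H_tree T y0"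

end

theory Submission
  imports Defs
begin

text \<open>The duality function is evaluated bottom-up: a leaf of weight n contributes y^n and an
  inner vertex combines the values a, b, c of its children to a (b + c - b c). Every jump acts at a
  single leaf and H is affine in the value of each leaf, so summing the four jump types leafwise
  shows that the generator of the process applied to H(-, y) equals dH/dy times the drift of the
  ODE. Hence \<phi>(t, X) = H(X, y(t)) solves the Kolmogorov backward equation, with values in
  [0, 1] because y stays in [0, 1]. Iterating the first-jump decomposition, such a bounded
  solution equals the expectation of \<phi>(0, -) up to a remainder bounded by the probability of at
  least N jumps. That probability vanishes as N grows: the total weight raises the jump rates only
  linearly, so the expected number of jumps up to time t is finite.\<close>

section \<open>Recursive evaluation of the duality function\<close>

definition prob_or :: "real \<Rightarrow> real \<Rightarrow> real" where
  "prob_or b c = b + c - b * c"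

fun H_rec :: "wtree \<Rightarrow> real \<Rightarrow> real" where
  "H_rec (Leaf n) y = y ^ n"
| "H_rec (Node a b c) y = H_rec a y * prob_or (H_rec b y) (H_rec c y)"

lemma of_bool_conj_disj:
  "(of_bool (A \<and> (B \<or> C)) :: real) = of_bool A * prob_or (of_bool B) (of_bool C)"
  by (simp add: prob_or_def)

lemma prod_lessThan_nth_eq_prod_list_map2:
  "length xs = length ys \<Longrightarrow> (\<Prod>i<length ys. f (xs ! i) (ys ! i)) = prod_list (map2 f xs ys)"
proof (induction ys arbitrary: xs)
  case Nil then show ?case by simp
next
  case (Cons y ys) then show ?case
    by (cases xs) (auto simp del: prod.lessThan_Suc simp add: prod.lessThan_Suc_shift)
qed

lemma sum_lists_length_add:
  fixes F :: "'a::finite list \<Rightarrow> 'b::comm_monoid_add"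
  shows "(\<Sum>xs | length xs = m + n. F xs) =
    (\<Sum>xs | length xs = m. \<Sum>ys | length ys = n. F (xs @ ys))"
proof -
  have split: "{xs. length xs = m + n} =
      (\<lambda>(xs, ys). xs @ ys) ` ({xs. length xs = m} \<times> {ys. length ys = n})"
    by (auto intro!: image_eqI[where x="(take m xs, drop m xs)" for xs])
  have "inj_on (\<lambda>(xs, ys). xs @ ys) ({xs :: 'a list. length xs = m} \<times> {ys. length ys = n})"
    by (auto simp: inj_on_def)
  then show ?thesis
    by (simp add: split sum.reindex sum.cartesian_product split_def)
qed

lemma bool_lists_length_1: "{bs :: bool list. length bs = Suc 0} = {[True], [False]}"
  by (auto simp: length_Suc_conv)

definition leaf_prob :: "real \<Rightarrow> bool \<Rightarrow> nat \<Rightarrow> real" where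
  "leaf_prob y b w = (if b then y ^ w else 1 - y ^ w)"

lemma sum_prod_leaf_prob:
  "(\<Sum>bs | length bs = length ws. prod_list (map2 (leaf_prob y) bs ws)) = 1"
proof (induction ws)
  case Nil then show ?case by simp
next
  case (Cons w ws)
  have "(\<Sum>bs | length bs = length (w # ws). prod_list (map2 (leaf_prob y) bs (w # ws)))
      = (\<Sum>bs | length bs = 1. \<Sum>cs | length cs = length ws.
           prod_list (map2 (leaf_prob y) (bs @ cs) (w # ws)))"
    using sum_lists_length_add[where m=1 and n="length ws"] by simp
  also have "\<dots> = (\<Sum>cs | length cs = length ws. prod_list (map2 (leaf_prob y) cs ws))"
    by (simp add: bool_lists_length_1 leaf_prob_def sum.distrib[symmetric] algebra_simps)
  finally show ?case using Cons by simp
qed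

lemma sum_sum_prob_or:
  fixes g h p q :: "'a \<Rightarrow> real"
  assumes "sum p B = 1" and "sum q C = 1"
  shows "(\<Sum>y\<in>B. \<Sum>z\<in>C. prob_or (g y) (h z) * (p y * q z)) =
    prob_or (\<Sum>y\<in>B. g y * p y) (\<Sum>z\<in>C. h z * q z)"
proof -
  have "\<And>y z. prob_or (g y) (h z) * (p y * q z) =
      g y * p y * q z + p y * (h z * q z) - g y * p y * (h z * q z)"
    by (simp add: prob_or_def algebra_simps)
  then show ?thesis
    using assms by (simp add: prob_or_def sum.distrib sum_subtractf
        sum_distrib_left[symmetric] sum_distrib_right[symmetric])
qed

lemma length_leaf_weights: "length (leaf_weights T) = nleaves T"
  by (induction T) auto

lemma H_tree_eq_sum_prod_list:
  "H_tree T y = (\<Sum>bs | length bs = nleaves T.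
     of_bool (eval_type T bs) * prod_list (map2 (leaf_prob y) bs (leaf_weights T)))"
  unfolding H_tree_def
  by (rule sum.cong[OF refl])
     (simp add: prod_lessThan_nth_eq_prod_list_map2[symmetric] length_leaf_weights leaf_prob_def)

lemma H_tree_eq_H_rec: "H_tree T y = H_rec T y"
proof (induction T)
  case (Leaf n)
  show ?case by (simp add: H_tree_eq_sum_prod_list bool_lists_length_1 leaf_prob_def)
next
  case (Node a b c)
  let ?P = "\<lambda>T bs. prod_list (map2 (leaf_prob y) bs (leaf_weights T))"
  let ?E = "\<lambda>T bs. of_bool (eval_type T bs) :: real"
  have total: "(\<Sum>bs | length bs = nleaves T. ?P T bs) = 1" for T
    using sum_prod_leaf_prob[where ws="leaf_weights T" and y=y] by (simp add: length_leaf_weights)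
  have IH: "H_rec T y = (\<Sum>bs | length bs = nleaves T. ?E T bs * ?P T bs)"
    if "T \<in> {a, b, c}" for T
    using Node.IH that by (auto simp flip: H_tree_eq_sum_prod_list)
  \<comment> \<open>the leaf types are independent, so the sum factorizes over the three subtrees\<close>
  have "H_tree (Node a b c) y = (\<Sum>b1 | length b1 = nleaves a. \<Sum>b2 | length b2 = nleaves b.
          \<Sum>b3 | length b3 = nleaves c.
          ?E a b1 * ?P a b1 * (prob_or (?E b b2) (?E c b3) * (?P b b2 * ?P c b3)))"
    unfolding H_tree_eq_sum_prod_list nleaves.simps add.assoc sum_lists_length_add
    by (simp add: length_leaf_weights of_bool_conj_disj mult_ac)
  also have "\<dots> = (\<Sum>b1 | length b1 = nleaves a. ?E a b1 * ?P a b1) *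
      (\<Sum>b2 | length b2 = nleaves b. \<Sum>b3 | length b3 = nleaves c.
         prob_or (?E b b2) (?E c b3) * (?P b b2 * ?P c b3))"
    by (subst sum_distrib_right) (simp only: sum_distrib_left)
  also have "\<dots> = (\<Sum>b1 | length b1 = nleaves a. ?E a b1 * ?P a b1) *
      prob_or (\<Sum>b2 | length b2 = nleaves b. ?E b b2 * ?P b b2)
              (\<Sum>b3 | length b3 = nleaves c. ?E c b3 * ?P c b3)"
    by (simp only: sum_sum_prob_or total)
  also have "\<dots> = H_rec (Node a b c) y"
    by (simp add: IH)
  finally show ?case .
qed

lemma prob_or_unit_interval:
  "0 \<le> b \<Longrightarrow> b \<le> 1 \<Longrightarrow> 0 \<le> c \<Longrightarrow> c \<le> 1 \<Longrightarrow> 0 \<le> prob_or b c \<and> prob_or b c \<le> 1"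
  using mult_le_one[of "1 - b" "1 - c"] mult_nonneg_nonneg[of "1 - b" "1 - c"]
  by (simp add: prob_or_def algebra_simps)

lemma H_rec_unit_interval: "0 \<le> v \<Longrightarrow> v \<le> 1 \<Longrightarrow> 0 \<le> H_rec T v \<and> H_rec T v \<le> 1"
proof (induction T)
  case (Node a b c)
  then show ?case
    using prob_or_unit_interval[of "H_rec b v" "H_rec c v"] by (auto intro: mult_le_one)
qed (simp add: power_le_one)

lemma H_unit_interval: "0 \<le> v \<Longrightarrow> v \<le> 1 \<Longrightarrow> 0 \<le> H X v \<and> H X v \<le> 1"
  by (cases X) (auto simp: H_tree_eq_H_rec H_rec_unit_interval)

section \<open>Substitution at a vertex and the jump operations\<close>

fun H_subst :: "wtree \<Rightarrow> dir list \<Rightarrow> real \<Rightarrow> real \<Rightarrow> real" where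
  "H_subst T [] z y = z"
| "H_subst (Leaf n) (d # p) z y = y ^ n"
| "H_subst (Node a b c) (DL # p) z y = H_subst a p z y * prob_or (H_rec b y) (H_rec c y)"
| "H_subst (Node a b c) (DM # p) z y = H_rec a y * prob_or (H_subst b p z y) (H_rec c y)"
| "H_subst (Node a b c) (DR # p) z y = H_rec a y * prob_or (H_rec b y) (H_subst c p z y)"

lemma H_rec_replace_at: "H_rec (replace_at p S T) y = H_subst T p (H_rec S y) y"
proof (induction T arbitrary: p)
  case (Leaf n) then show ?case by (cases p) auto
next
  case (Node a b c) then show ?case
    by (cases p; case_tac "hd p") (auto simp: neq_Nil_conv)
qed

lemma H_subst_affine:
  "H_subst T p z y = H_subst T p 0 y + z * (H_subst T p 1 y - H_subst T p 0 y)"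
proof (induction T arbitrary: p)
  case (Leaf n) then show ?case by (cases p) auto
next
  case (Node a b c)
  show ?case
  proof (cases p)
    case (Cons d q)
    then show ?thesis
      by (cases d; simp only: H_subst.simps Node.IH(1)[of q] Node.IH(2)[of q] Node.IH(3)[of q])
         (simp_all add: prob_or_def algebra_simps)
  qed simp
qed

lemma weight_at_simps [simp]:
  "weight_at (Leaf n) [] = n"
  "weight_at (Node a b c) (DL # p) = weight_at a p"
  "weight_at (Node a b c) (DM # p) = weight_at b p"
  "weight_at (Node a b c) (DR # p) = weight_at c p"
  by (simp_all add: weight_at_def)

lemma H_subst_leaf_weight:
  "p \<in> set (leaf_paths T) \<Longrightarrow> H_subst T p (y ^ weight_at T p) y = H_rec T y"
  by (induction T arbitrary: p) auto

lemma H_subst_append: "H_subst T (q @ r) z y = H_subst T q (H_subst (subtree T q) r z y) y"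
proof (induction T arbitrary: q)
  case (Leaf n) then show ?case by (cases q) auto
next
  case (Node a b c) then show ?case
    by (cases q; case_tac "hd q") (auto simp: neq_Nil_conv)
qed

lemma H_rec_add_leftmost: "H_rec (add_leftmost n W) y = y ^ n * H_rec W y"
  by (induction W) (auto simp: power_add)

lemma H_rec_graft: "H_rec (graft V W) y = H_rec V y * H_rec W y"
  by (induction V) (auto simp: H_rec_add_leftmost)

lemma H_rec_total_weight_0: "total_weight T = 0 \<Longrightarrow> H_rec T y = 1"
  by (induction T) (auto simp: prob_or_def)

lemma subtree_append: "subtree T (q @ r) = subtree (subtree T q) r"
proof (induction T arbitrary: q)
  case (Leaf n) then show ?case by (cases q; cases r) auto
next
  case (Node a b c) then show ?case
    by (cases q; case_tac "hd q") (auto simp: neq_Nil_conv)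
qed

lemma leaf_paths_subtree: "q @ r \<in> set (leaf_paths T) \<Longrightarrow> r \<in> set (leaf_paths (subtree T q))"
proof (induction T arbitrary: q)
  case (Leaf n) then show ?case by (cases q) auto
next
  case (Node a b c) then show ?case
    by (cases q; case_tac "hd q") (auto simp: neq_Nil_conv)
qed

lemma leaf_paths_Cons_Node:
  "e # r \<in> set (leaf_paths U) \<Longrightarrow>
   \<exists>a b c. U = Node a b c \<and> r \<in> set (leaf_paths (subtree U [e]))"
  by (cases U; cases e) auto

lemma subtree_leaf_path: "p \<in> set (leaf_paths T) \<Longrightarrow> subtree T p = Leaf (weight_at T p)"
  by (induction T arbitrary: p) auto

lemma H_subst_left_path_0:
  "\<forall>e\<in>set p. e = DL \<Longrightarrow> p \<in> set (leaf_paths T) \<Longrightarrow> H_subst T p 0 y = 0"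
  by (induction T arbitrary: p) auto

lemma H_subst_weightless_left_siblings_1:
  "r \<in> set (leaf_paths V) \<Longrightarrow>
   (\<forall>q e q'. r = q @ e # q' \<longrightarrow> e \<noteq> DL \<and> total_weight (subtree V (q @ [DL])) = 0) \<Longrightarrow>
   H_subst V r 1 y = 1"
proof (induction r arbitrary: V)
  case Nil then show ?case by simp
next
  case (Cons e r)
  obtain a b c where V: "V = Node a b c" and r: "r \<in> set (leaf_paths (subtree V [e]))"
    using leaf_paths_Cons_Node[OF Cons.prems(1)] by blast
  have e: "e \<noteq> DL" and a: "total_weight a = 0"
    using Cons.prems(2)[rule_format, of "[]" e r] V by auto
  have "H_subst (subtree V [e]) r 1 y = 1"
  proof (rule Cons.IH[OF r], intro allI impI)
    fix q e' q' assume "r = q @ e' # q'"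
    then show "e' \<noteq> DL \<and> total_weight (subtree (subtree V [e]) (q @ [DL])) = 0"
      using Cons.prems(2)[rule_format, of "e # q" e' q'] by (simp flip: subtree_append)
  qed
  then show ?case using V e H_rec_total_weight_0[OF a] by (cases e) (auto simp: prob_or_def)
qed

lemma op_times_unit_weight_cases:
  assumes p: "p \<in> set (leaf_paths T)" and special: "\<not> (weight_at T p \<noteq> 1 \<or> p = [] \<or> last p = DL)"
  obtains b d r a1 b1 c1 where "p = b @ d # r" and "d \<noteq> DL" and "subtree T b = Node a1 b1 c1"
    and "op_times T p = replace_at b a1 T"
    and "\<forall>q e q'. r = q @ e # q' \<longrightarrow>
           e \<noteq> DL \<and> total_weight (subtree (subtree T (b @ [d])) (q @ [DL])) = 0"
proof -
  define k where "k = (GREATEST k. k < length p \<and> anc_ok T (take k p))"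
  have "0 < length p \<and> anc_ok T (take 0 p)" using special by (simp add: anc_ok_def)
  then have kp: "k < length p"
    unfolding k_def by (rule GreatestI_nat[where b="length p", THEN conjunct1]) auto
  have kmax: "\<not> anc_ok T (take j p)" if "k < j" "j < length p" for j
    using that Greatest_le_nat[of "\<lambda>k. k < length p \<and> anc_ok T (take k p)" j "length p"]
    unfolding k_def by auto
  define b where "b = take k p"
  define d where "d = p ! k"
  define r where "r = drop (Suc k) p"
  have pdec: "p = b @ d # r" and lb: "length b = k"
    unfolding b_def d_def r_def using kp by (simp_all add: Cons_nth_drop_Suc)
  have last_r: "last (d # r) \<noteq> DL" using special pdec by simp
  have not_anc: "\<not> anc_ok T (b @ d # q)" if "r = q @ q'" "q' \<noteq> []" for q q'
    using kmax[of "Suc (k + length q)"] pdec lb that by simp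
  obtain a1 b1 c1 where U: "subtree T b = Node a1 b1 c1"
    using leaf_paths_Cons_Node[OF leaf_paths_subtree] p pdec by metis
  have "d \<noteq> DL"
    using not_anc[of "[]" r] last_r by (cases r) (auto simp: anc_ok_def)
  moreover have "op_times T p = replace_at b a1 T"
    using special U unfolding op_times_def Let_def k_def[symmetric] b_def
    by (simp add: subtree_append)
  moreover have "e \<noteq> DL \<and> total_weight (subtree (subtree T (b @ [d])) (q @ [DL])) = 0"
    if "r = q @ e # q'" for q e q'
  proof
    show "total_weight (subtree (subtree T (b @ [d])) (q @ [DL])) = 0"
      using not_anc[of q "e # q'"] that by (simp add: anc_ok_def flip: subtree_append)
    show "e \<noteq> DL"
      using not_anc[of "q @ [e]" q'] last_r that by (cases q') (auto simp: anc_ok_def)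
  qed
  ultimately show ?thesis using that pdec U by blast
qed

lemma op_circ_cases:
  assumes p: "p \<in> set (leaf_paths T)"
  obtains (cemetery) "op_circ T p = None" and "\<forall>e\<in>set p. e = DL"
  | (merge) par d r a1 b1 c1 where "p = par @ d # r" and "d \<noteq> DL" and "\<forall>e\<in>set r. e = DL"
      and "subtree T par = Node a1 b1 c1"
      and "op_circ T p = Some (replace_at par (graft a1 (if d = DM then c1 else b1)) T)"
proof -
  define k where "k = (GREATEST k. k \<le> length p \<and> (k = 0 \<or> last (take k p) \<noteq> DL))"
  have kp: "k \<le> length p \<and> (k = 0 \<or> last (take k p) \<noteq> DL)"
    unfolding k_def by (rule GreatestI_nat[of _ 0]) auto
  have kmax: "last (take j p) = DL" if "k < j" "j \<le> length p" for j
  proof (rule ccontr)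
    assume "last (take j p) \<noteq> DL"
    then have "j \<le> k" unfolding k_def using that(2) by (intro Greatest_le_nat) auto
    then show False using that by simp
  qed
  have rest_DL: "\<forall>e\<in>set (drop k p). e = DL"
  proof
    fix e assume "e \<in> set (drop k p)"
    then obtain i where i: "i < length (drop k p)" "drop k p ! i = e"
      by (auto simp: in_set_conv_nth)
    have "last (take (Suc (k + i)) p) = DL" using kmax[of "Suc (k + i)"] i by simp
    then show "e = DL" using i by (simp add: take_Suc_conv_app_nth)
  qed
  show ?thesis
  proof (cases "k = 0")
    case True
    then show ?thesis using cemetery rest_DL unfolding op_circ_def Let_def k_def[symmetric] by simp
  next
    case False
    define par where "par = take (k - 1) p"
    define d where "d = p ! (k - 1)"
    define r where "r = drop k p"
    have k1: "k - 1 < length p" "Suc (k - 1) = k" using kp False by auto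
    have pdec: "p = par @ d # r" unfolding par_def d_def r_def
      using id_take_nth_drop[OF k1(1)] k1(2) by simp
    have "take k p = par @ [d]" unfolding par_def d_def
      using take_Suc_conv_app_nth[OF k1(1)] k1(2) by simp
    then have "d \<noteq> DL" using kp False by simp
    obtain a1 b1 c1 where U: "subtree T par = Node a1 b1 c1"
      using leaf_paths_Cons_Node[OF leaf_paths_subtree] p pdec by metis
    have "op_circ T p = Some (replace_at par (graft a1 (if d = DM then c1 else b1)) T)"
      using False U unfolding op_circ_def Let_def k_def[symmetric] par_def d_def
      by (simp add: subtree_append)
    then show ?thesis using merge pdec \<open>d \<noteq> DL\<close> rest_DL U r_def by blast
  qed
qed

lemma H_rec_op_bin: "H_rec (op_bin T p) y = H_subst T p (y ^ (weight_at T p + 1)) y"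
  by (simp add: op_bin_def H_rec_replace_at)

lemma H_rec_op_ter: "H_rec (op_ter T p) y = H_subst T p (y ^ weight_at T p * prob_or y y) y"
  by (simp add: op_ter_def H_rec_replace_at)

text \<open>In the pruning case of op_times the leaf has weight 1, so the claim is that the subtree at
  b_l takes the value of its left child once the leaf is set to 1. Indeed, every vertex on the
  path strictly below b_l has a weightless left child and continues to a middle or right child,
  so it has value 1 by induction from the leaf.\<close>
lemma H_rec_op_times:
  assumes p: "p \<in> set (leaf_paths T)"
  shows "H_rec (op_times T p) y = H_subst T p (y ^ (weight_at T p - 1)) y"
proof (cases "weight_at T p \<noteq> 1 \<or> p = [] \<or> last p = DL")
  case True then show ?thesis by (simp add: op_times_def H_rec_replace_at Let_def)
next
  case False
  then obtain b d r a1 b1 c1 where pdec: "p = b @ d # r" and d: "d \<noteq> DL"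
    and U: "subtree T b = Node a1 b1 c1" and opt: "op_times T p = replace_at b a1 T"
    and r: "\<forall>q e q'. r = q @ e # q' \<longrightarrow>
           e \<noteq> DL \<and> total_weight (subtree (subtree T (b @ [d])) (q @ [DL])) = 0"
    by (rule op_times_unit_weight_cases[OF p])
  have "r \<in> set (leaf_paths (subtree T (b @ [d])))"
    using p pdec leaf_paths_subtree[of "b @ [d]" r T] by simp
  then have "H_subst (subtree T (b @ [d])) r 1 y = 1"
    using H_subst_weightless_left_siblings_1 r by blast
  then have "H_subst (subtree T b) (d # r) 1 y = H_rec a1 y"
    using U d by (cases d) (auto simp: prob_or_def subtree_append)
  then show ?thesis
    using False pdec opt by (simp add: H_rec_replace_at H_subst_append)
qed

text \<open>Setting the leaf to 0 gives value 0 to its chain of left ancestors up to \<mu>*, and a vertex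
  whose middle or right child has value 0 has the product of the values of its other two children,
  which is the value of the graft.\<close>
lemma H_op_circ:
  assumes p: "p \<in> set (leaf_paths T)"
  shows "H (op_circ T p) y = H_subst T p 0 y"
  using p
proof (cases rule: op_circ_cases)
  case cemetery
  then show ?thesis using H_subst_left_path_0[OF _ p] by simp
next
  case (merge par d r a1 b1 c1)
  have "r \<in> set (leaf_paths (subtree T (par @ [d])))"
    using p merge(1) leaf_paths_subtree[of "par @ [d]" r T] by simp
  then have "H_subst (subtree T (par @ [d])) r 0 y = 0"
    using H_subst_left_path_0 merge(3) by blast
  then have "H_subst (subtree T par) (d # r) 0 y = H_rec (graft a1 (if d = DM then c1 else b1)) y"
    using merge(2,4) by (cases d) (auto simp: prob_or_def H_rec_graft subtree_append)
  then show ?thesis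
    using merge(1,5) by (simp add: H_rec_replace_at H_subst_append H_tree_eq_H_rec)
qed

section \<open>The generator applied to the duality function\<close>

lemma sum_list_concat: "sum_list (concat xss) = sum_list (map sum_list xss)"
  by (induction xss) auto

lemma sum_list_transitions:
  "sum_list (map (\<lambda>(a, Y). a * f Y) (transitions s \<gamma> u \<nu>0 \<nu>1 (Some T))) =
   sum_list (map (\<lambda>p. real (weight_at T p) * (s * f (Some (op_bin T p)) + \<gamma> * f (Some (op_ter T p))
      + u * \<nu>1 * f (Some (op_times T p)) + u * \<nu>0 * f (op_circ T p))) (leaf_paths T))"
  by (simp add: map_concat sum_list_concat o_def Let_def algebra_simps)

lemma total_rate_Some_leaf_paths:
  "total_rate s \<gamma> u \<nu>0 \<nu>1 (Some T) =
   sum_list (map (\<lambda>p. real (weight_at T p) * (s + \<gamma> + u * \<nu>1 + u * \<nu>0)) (leaf_paths T))"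
  by (simp add: total_rate_def map_concat sum_list_concat o_def Let_def algebra_simps)

lemma map_weight_at_leaf_paths: "map (weight_at T) (leaf_paths T) = leaf_weights T"
  by (induction T) (auto simp: o_def)

lemma sum_list_weight_at_leaf_paths:
  "sum_list (map (\<lambda>p. real (weight_at T p)) (leaf_paths T)) = real (total_weight T)"
proof -
  have "sum_list (map (\<lambda>p. real (weight_at T p)) (leaf_paths T)) =
      sum_list (map real (leaf_weights T))"
    by (simp flip: map_weight_at_leaf_paths add: o_def)
  also have "\<dots> = real (total_weight T)" by (induction T) auto
  finally show ?thesis .
qed

lemma total_rate_Some:
  "total_rate s \<gamma> u \<nu>0 \<nu>1 (Some T) = (s + \<gamma> + u * \<nu>1 + u * \<nu>0) * real (total_weight T)"
  by (simp add: total_rate_Some_leaf_paths sum_list_mult_const sum_list_weight_at_leaf_paths)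

lemma total_rate_None [simp]: "total_rate s \<gamma> u \<nu>0 \<nu>1 None = 0"
  by (simp add: total_rate_def)

definition drift :: "real \<Rightarrow> real \<Rightarrow> real \<Rightarrow> real \<Rightarrow> real \<Rightarrow> real \<Rightarrow> real" where
  "drift s \<gamma> u \<nu>0 \<nu>1 y = - y * (1 - y) * (s + \<gamma> * (1 - y)) + u * \<nu>1 * (1 - y) - u * \<nu>0 * y"

text \<open>H_rec T is affine in the value at each leaf p, with slope H_subst T p 1 - H_subst T p 0, so
  its derivative collects these slopes times the derivatives of the leaf values y ^ m.\<close>
definition dH_rec :: "wtree \<Rightarrow> real \<Rightarrow> real" where
  "dH_rec T y = sum_list (map (\<lambda>p. (H_subst T p 1 y - H_subst T p 0 y) *
       (real (weight_at T p) * y ^ (weight_at T p - 1))) (leaf_paths T))"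

lemma leaf_generator_identity:
  "real m * (s * (A + y ^ (m + 1) * B) + \<gamma> * (A + y ^ m * prob_or y y * B)
      + u * \<nu>1 * (A + y ^ (m - 1) * B) + u * \<nu>0 * A)
    - real m * (s + \<gamma> + u * \<nu>1 + u * \<nu>0) * (A + y ^ m * B)
   = B * (real m * y ^ (m - 1)) * drift s \<gamma> u \<nu>0 \<nu>1 y"
proof (cases m)
  case (Suc k)
  then have "y ^ (m + 1) = y ^ k * y * y" "y ^ m = y ^ k * y" "y ^ (m - 1) = y ^ k"
    by auto
  then show ?thesis unfolding drift_def prob_or_def by (simp only:) (simp add: algebra_simps)
qed simp

lemma generator_H_rec:
  "sum_list (map (\<lambda>(a, Y). a * H Y y) (transitions s \<gamma> u \<nu>0 \<nu>1 (Some T)))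
     - total_rate s \<gamma> u \<nu>0 \<nu>1 (Some T) * H_rec T y = dH_rec T y * drift s \<gamma> u \<nu>0 \<nu>1 y"
proof -
  define L where "L p = real (weight_at T p) * (s * H (Some (op_bin T p)) y
      + \<gamma> * H (Some (op_ter T p)) y + u * \<nu>1 * H (Some (op_times T p)) y + u * \<nu>0 * H (op_circ T p) y)"
    for p
  define R where "R p = real (weight_at T p) * (s + \<gamma> + u * \<nu>1 + u * \<nu>0) * H_rec T y" for p
  have "L p - R p = (H_subst T p 1 y - H_subst T p 0 y) *
      (real (weight_at T p) * y ^ (weight_at T p - 1)) * drift s \<gamma> u \<nu>0 \<nu>1 y"
    if p: "p \<in> set (leaf_paths T)" for p
  proof -
    let ?m = "weight_at T p" and ?A = "H_subst T p 0 y"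
      and ?B = "H_subst T p 1 y - H_subst T p 0 y"
    have aff: "H_subst T p z y = ?A + z * ?B" for z by (rule H_subst_affine)
    have "H_rec T y = ?A + y ^ ?m * ?B"
      using H_subst_leaf_weight[OF p, of y] aff[of "y ^ ?m"] by simp
    moreover have "H (Some (op_bin T p)) y = ?A + y ^ (?m + 1) * ?B"
      by (simp only: H.simps H_tree_eq_H_rec H_rec_op_bin aff[of "y ^ (?m + 1)"])
    moreover have "H (Some (op_ter T p)) y = ?A + y ^ ?m * prob_or y y * ?B"
      by (simp only: H.simps H_tree_eq_H_rec H_rec_op_ter aff[of "y ^ ?m * prob_or y y"] mult.assoc)
    moreover have "H (Some (op_times T p)) y = ?A + y ^ (?m - 1) * ?B"
      by (simp only: H.simps H_tree_eq_H_rec H_rec_op_times[OF p] aff[of "y ^ (?m - 1)"])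
    ultimately show ?thesis
      unfolding L_def R_def H_op_circ[OF p] by (simp only: leaf_generator_identity)
  qed
  then have "sum_list (map L (leaf_paths T)) - sum_list (map R (leaf_paths T)) =
      dH_rec T y * drift s \<gamma> u \<nu>0 \<nu>1 y"
    unfolding dH_rec_def sum_list_mult_const[symmetric] sum_list_subtractf[symmetric]
    by (intro arg_cong[where f=sum_list] map_cong) auto
  then show ?thesis
    unfolding L_def R_def sum_list_transitions total_rate_Some_leaf_paths sum_list_mult_const .
qed

lemma dH_rec_Node:
  "dH_rec (Node a b c) y = dH_rec a y * prob_or (H_rec b y) (H_rec c y)
    + H_rec a y * (1 - H_rec c y) * dH_rec b y + H_rec a y * (1 - H_rec b y) * dH_rec c y"
proof -
  let ?w = "\<lambda>T p. real (weight_at T p) * y ^ (weight_at T p - 1)"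
  have "(H_subst a p 1 y * prob_or (H_rec b y) (H_rec c y)
        - H_subst a p 0 y * prob_or (H_rec b y) (H_rec c y)) * ?w a p =
      ((H_subst a p 1 y - H_subst a p 0 y) * ?w a p) * prob_or (H_rec b y) (H_rec c y)"
    "(H_rec a y * prob_or (H_subst b p 1 y) (H_rec c y)
        - H_rec a y * prob_or (H_subst b p 0 y) (H_rec c y)) * ?w b p =
      H_rec a y * (1 - H_rec c y) * ((H_subst b p 1 y - H_subst b p 0 y) * ?w b p)"
    "(H_rec a y * prob_or (H_rec b y) (H_subst c p 1 y)
        - H_rec a y * prob_or (H_rec b y) (H_subst c p 0 y)) * ?w c p =
      H_rec a y * (1 - H_rec b y) * ((H_subst c p 1 y - H_subst c p 0 y) * ?w c p)" for p
    by (simp_all add: prob_or_def algebra_simps)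
  then show ?thesis
    unfolding dH_rec_def
    by (simp only: leaf_paths.simps map_append sum_list_append map_map o_def H_subst.simps
        weight_at_simps sum_list_mult_const sum_list_const_mult)
qed

lemma DERIV_H_rec: "(H_rec T has_real_derivative dH_rec T y) (at y)"
proof (induction T)
  case (Leaf n)
  show ?case unfolding H_rec.simps dH_rec_def using DERIV_pow[of n y] by simp
next
  case (Node a b c)
  have "((\<lambda>y. H_rec a y * (H_rec b y + H_rec c y - H_rec b y * H_rec c y)) has_real_derivative
      dH_rec a y * prob_or (H_rec b y) (H_rec c y)
      + (dH_rec b y + dH_rec c y - (dH_rec b y * H_rec c y + dH_rec c y * H_rec b y)) * H_rec a y)
      (at y)"
    unfolding prob_or_def by (intro DERIV_mult DERIV_diff DERIV_add Node.IH)
  then show ?case by (simp add: dH_rec_Node prob_or_def algebra_simps)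
qed

section \<open>Total weight as a Lyapunov function\<close>

lemma total_weight_replace_at:
  "q @ r \<in> set (leaf_paths T) \<Longrightarrow>
   total_weight (replace_at q S T) + total_weight (subtree T q) = total_weight T + total_weight S"
proof (induction T arbitrary: q)
  case (Leaf n) then show ?case by (cases q) auto
next
  case (Node a b c) then show ?case
    by (cases q; case_tac "hd q") (fastforce simp: neq_Nil_conv)+
qed

lemma total_weight_replace_leaf:
  "p \<in> set (leaf_paths T) \<Longrightarrow>
   total_weight (replace_at p S T) + weight_at T p = total_weight T + total_weight S"
  using total_weight_replace_at[of p "[]" T S] subtree_leaf_path[of p T] by simp

lemma total_weight_add_leftmost: "total_weight (add_leftmost n W) = n + total_weight W"
  by (induction W) auto

lemma total_weight_graft: "total_weight (graft V W) = total_weight V + total_weight W"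
  by (induction V) (auto simp: total_weight_add_leftmost)

definition state_size :: "state \<Rightarrow> real" where
  "state_size X = (case X of None \<Rightarrow> 1 | Some T \<Rightarrow> 1 + real (total_weight T))"

lemma state_size_ge_1: "state_size X \<ge> 1"
  by (cases X) (auto simp: state_size_def)

lemma state_size_op_bin:
  "p \<in> set (leaf_paths T) \<Longrightarrow> state_size (Some (op_bin T p)) = state_size (Some T) + 1"
  using total_weight_replace_leaf[of p T "Leaf (weight_at T p + 1)"]
  by (simp add: state_size_def op_bin_def)

lemma state_size_op_ter:
  "p \<in> set (leaf_paths T) \<Longrightarrow> state_size (Some (op_ter T p)) = state_size (Some T) + 2"
  using total_weight_replace_leaf[of p T "Node (Leaf (weight_at T p)) (Leaf 1) (Leaf 1)"]
  by (simp add: state_size_def op_ter_def)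

lemma state_size_op_times:
  assumes p: "p \<in> set (leaf_paths T)"
  shows "state_size (Some (op_times T p)) \<le> state_size (Some T)"
proof (cases "weight_at T p \<noteq> 1 \<or> p = [] \<or> last p = DL")
  case True then show ?thesis
    using total_weight_replace_leaf[OF p, of "Leaf (weight_at T p - 1)"]
    by (simp add: op_times_def Let_def state_size_def)
next
  case False
  then obtain b d r a1 b1 c1 where "p = b @ d # r" and "subtree T b = Node a1 b1 c1"
    and "op_times T p = replace_at b a1 T"
    by (rule op_times_unit_weight_cases[OF p])
  then show ?thesis
    using total_weight_replace_at[of b "d # r" T a1] p by (simp add: state_size_def)
qed

lemma state_size_op_circ:
  assumes p: "p \<in> set (leaf_paths T)"
  shows "state_size (op_circ T p) \<le> state_size (Some T)"
  using p
proof (cases rule: op_circ_cases)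
  case cemetery
  then show ?thesis using state_size_ge_1[of "Some T"] by (simp add: state_size_def)
next
  case (merge par d r a1 b1 c1)
  then show ?thesis
    using total_weight_replace_at[of par "d # r" T "graft a1 (if d = DM then c1 else b1)"] p
    by (cases "d = DM") (simp_all add: state_size_def total_weight_graft)
qed

lemma last_nonpos_point:
  fixes w :: "real \<Rightarrow> real"
  assumes "a \<le> b" and "continuous_on {a..b} w" and "w a \<le> 0"
  obtains t0 where "a \<le> t0" "t0 \<le> b" "w t0 \<le> 0" "\<And>x. t0 < x \<Longrightarrow> x \<le> b \<Longrightarrow> w x > 0"
proof -
  define A where "A = {a..b} \<inter> w -` {..0}"
  have "closed A" unfolding A_def
    by (rule continuous_closed_preimage[OF assms(2)]) auto
  moreover have "a \<in> A" using assms by (simp add: A_def)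
  moreover have bdd: "bdd_above A" unfolding A_def by (rule bdd_aboveI[of _ b]) auto
  ultimately have "Sup A \<in> A" by (intro closed_contains_Sup) auto
  moreover have "w x > 0" if "Sup A < x" "x \<le> b" for x
  proof (rule ccontr)
    assume "\<not> w x > 0"
    then have "x \<in> A" using that \<open>Sup A \<in> A\<close> by (auto simp: A_def)
    then show False using cSup_upper[OF _ bdd] that(1) by fastforce
  qed
  ultimately show ?thesis using that by (auto simp: A_def)
qed

lemma nonpos_by_exponential_bound:
  fixes w w' :: "real \<Rightarrow> real"
  assumes t1: "t1 \<ge> 0" and cont: "continuous_on {0..t1} w" and w0: "w 0 \<le> 0"
    and der: "\<And>t. 0 < t \<Longrightarrow> t < t1 \<Longrightarrow> w t > 0 \<Longrightarrow> (w has_real_derivative w' t) (at t)"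
    and growth: "\<And>t. 0 < t \<Longrightarrow> t < t1 \<Longrightarrow> w t > 0 \<Longrightarrow> w' t \<le> L * w t"
  shows "w t1 \<le> 0"
proof (rule ccontr)
  assume "\<not> w t1 \<le> 0"
  obtain t0 where t0: "0 \<le> t0" "t0 \<le> t1" "w t0 \<le> 0" and pos: "\<And>x. t0 < x \<Longrightarrow> x \<le> t1 \<Longrightarrow> w x > 0"
    using last_nonpos_point[OF t1 cont w0] by blast
  with \<open>\<not> w t1 \<le> 0\<close> have lt: "t0 < t1" by (cases "t0 = t1") auto
  define g where "g t = exp (- L * t) * w t" for t
  have g': "(g has_real_derivative exp (- L * x) * (w' x - L * w x)) (at x)"
    if "t0 < x" "x < t1" for x
    unfolding g_def using der[of x] pos[of x] that t0
    by (auto intro!: derivative_eq_intros simp: algebra_simps)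
  have "continuous_on {t0..t1} g" unfolding g_def
    by (intro continuous_intros continuous_on_subset[OF cont]) (use t0 in auto)
  then obtain z where z: "t0 < z" "z < t1"
    and mvt: "g t1 - g t0 = (t1 - t0) * (exp (- L * z) * (w' z - L * w z))"
    using MVT[OF lt] g' DERIV_unique real_differentiable_def by metis
  have "(t1 - t0) * (exp (- L * z) * (w' z - L * w z)) \<le> 0"
    using growth[of z] z t0 pos[of z] lt by (intro mult_nonneg_nonpos) auto
  then have "g t1 \<le> g t0" using mvt by simp
  moreover have "g t0 \<le> 0" unfolding g_def using t0 by (simp add: mult_nonneg_nonpos)
  moreover have "g t1 > 0" unfolding g_def using \<open>\<not> w t1 \<le> 0\<close> by simp
  ultimately show False by simp
qed

section \<open>The first-jump decomposition\<close>

lemma integral_reflect_interval: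
  "integral {0..t} (\<lambda>r. h (t - r)) = integral {0..t::real} (h :: real \<Rightarrow> real)"
proof -
  have "integral {0..t} (\<lambda>r. h (t - r)) = integral {-t - (-t)..0 - (-t)} (\<lambda>x. h (- (x + (-t))))"
    by simp
  also have "\<dots> = integral {-t..0} (\<lambda>x. h (- x))"
    by (rule integral_shift_real_ivl)
  also have "\<dots> = integral {0..t} h"
    using Henstock_Kurzweil_Integration.integral_reflect_real[of t 0 h] by simp
  finally show ?thesis .
qed

lemma continuous_on_sum_list_map:
  "(\<And>x. x \<in> set xs \<Longrightarrow> continuous_on S (g x)) \<Longrightarrow>
   continuous_on S (\<lambda>r. sum_list (map (\<lambda>x. g x r) xs) :: real)"
  by (induction xs) (auto intro!: continuous_intros)

lemma DERIV_scaled_exp_minus_1: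
  fixes c g :: real
  assumes "g \<noteq> 0"
  shows "((\<lambda>r. c / g * (exp (g * r) - 1)) has_real_derivative c * exp (g * r)) (at r within S)"
  using assms by (auto intro!: derivative_eq_intros)

locale asg_rates =
  fixes s \<gamma> u \<nu>0 \<nu>1 :: real
  assumes s_pos: "s > 0" and nonneg_rates: "\<gamma> \<ge> 0" "u \<ge> 0" "\<nu>0 \<ge> 0" "\<nu>1 \<ge> 0"
begin

abbreviation jumps :: "state \<Rightarrow> (real \<times> state) list" where
  "jumps X \<equiv> transitions s \<gamma> u \<nu>0 \<nu>1 X"

abbreviation rate :: "state \<Rightarrow> real" where
  "rate X \<equiv> total_rate s \<gamma> u \<nu>0 \<nu>1 X"

definition jump_sum :: "(real \<Rightarrow> state \<Rightarrow> real) \<Rightarrow> real \<Rightarrow> state \<Rightarrow> real" where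
  "jump_sum \<phi> r X = sum_list (map (\<lambda>(a, Y). a * \<phi> r Y) (jumps X))"

text \<open>first_jump \<phi> t X = E_X[\<phi>(t - \<tau>, X_\<tau>); \<tau> \<le> t] for the first jump time \<tau>, after
  substituting r = t - \<tau>.\<close>
definition first_jump :: "(real \<Rightarrow> state \<Rightarrow> real) \<Rightarrow> real \<Rightarrow> state \<Rightarrow> real" where
  "first_jump \<phi> t X =
     exp (- rate X * t) * integral {0..t} (\<lambda>r. exp (rate X * r) * jump_sum \<phi> r X)"

definition time_cont :: "(real \<Rightarrow> state \<Rightarrow> real) \<Rightarrow> bool" where
  "time_cont \<phi> \<longleftrightarrow> (\<forall>Y T. continuous_on {0..T} (\<lambda>t. \<phi> t Y))"

lemma jump_rate_nonneg: "(a, Y) \<in> set (jumps X) \<Longrightarrow> a \<ge> 0"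
  using s_pos nonneg_rates by (cases X) (auto simp: Let_def)

lemma continuous_on_jump_sum: "time_cont \<phi> \<Longrightarrow> continuous_on {0..T} (\<lambda>r. jump_sum \<phi> r X)"
  unfolding jump_sum_def time_cont_def
  by (rule continuous_on_sum_list_map) (auto simp: split_def intro!: continuous_intros)

lemma integrable_first_jump_integrand:
  "time_cont \<phi> \<Longrightarrow> (\<lambda>r. exp (rate X * r) * jump_sum \<phi> r X) integrable_on {0..T}"
  by (intro integrable_continuous_interval continuous_intros continuous_on_jump_sum)

lemma time_cont_first_jump: "time_cont \<phi> \<Longrightarrow> time_cont (first_jump \<phi>)"
  unfolding time_cont_def[of "first_jump \<phi>"] first_jump_def
  by (intro allI continuous_intros indefinite_integral_continuous_1
      integrable_first_jump_integrand)

lemma time_cont_first_jump_pow: "time_cont \<phi> \<Longrightarrow> time_cont ((first_jump ^^ N) \<phi>)"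
  by (induction N) (auto intro: time_cont_first_jump)

lemma time_cont_const: "time_cont (\<lambda>t Y. c)"
  by (simp add: time_cont_def)

lemma time_cont_sum:
  "(\<And>n. n < (N::nat) \<Longrightarrow> time_cont (\<phi> n)) \<Longrightarrow> time_cont (\<lambda>t Y. \<Sum>n<N. \<phi> n t Y)"
  unfolding time_cont_def by (auto intro!: continuous_on_sum)

lemma time_cont_add_const: "time_cont \<phi> \<Longrightarrow> time_cont (\<lambda>t Y. a + \<phi> t Y)"
  unfolding time_cont_def by (auto intro!: continuous_intros)

lemma time_cont_cmult: "time_cont \<phi> \<Longrightarrow> time_cont (\<lambda>t Y. c * \<phi> t Y)"
  unfolding time_cont_def by (auto intro!: continuous_intros)

lemma first_jump_cong:
  "(\<And>r Y. r \<in> {0..t} \<Longrightarrow> \<phi> r Y = \<psi> r Y) \<Longrightarrow> first_jump \<phi> t X = first_jump \<psi> t X"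
  unfolding first_jump_def jump_sum_def by (intro arg_cong2[where f="(*)"] refl integral_cong) auto

lemma first_jump_mono:
  assumes "time_cont \<phi>" "time_cont \<psi>" "\<And>r Y. r \<in> {0..t} \<Longrightarrow> \<phi> r Y \<le> \<psi> r Y"
  shows "first_jump \<phi> t X \<le> first_jump \<psi> t X"
  unfolding first_jump_def
proof (rule mult_left_mono[OF _ exp_ge_zero],
    rule integral_le[OF integrable_first_jump_integrand integrable_first_jump_integrand])
  fix r assume r: "r \<in> {0..t}"
  have "jump_sum \<phi> r X \<le> jump_sum \<psi> r X" unfolding jump_sum_def
    by (rule sum_list_mono) (auto intro!: mult_left_mono assms(3)[OF r] dest: jump_rate_nonneg)
  then show "exp (rate X * r) * jump_sum \<phi> r X \<le> exp (rate X * r) * jump_sum \<psi> r X" by simp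
qed (use assms in auto)

lemma first_jump_add:
  assumes "time_cont \<phi>" "time_cont \<psi>"
  shows "first_jump (\<lambda>t Y. \<phi> t Y + \<psi> t Y) t X = first_jump \<phi> t X + first_jump \<psi> t X"
proof -
  have "jump_sum (\<lambda>t Y. \<phi> t Y + \<psi> t Y) r X = jump_sum \<phi> r X + jump_sum \<psi> r X" for r
    unfolding jump_sum_def by (simp add: split_def distrib_left sum_list_addf)
  then show ?thesis unfolding first_jump_def
    by (simp add: distrib_left integral_add integrable_first_jump_integrand assms)
qed

lemma first_jump_cmult: "first_jump (\<lambda>t Y. c * \<phi> t Y) t X = c * first_jump \<phi> t X"
proof -
  have "jump_sum (\<lambda>t Y. c * \<phi> t Y) r X = c * jump_sum \<phi> r X" for r
    unfolding jump_sum_def by (simp add: split_def sum_list_const_mult[symmetric] algebra_simps)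
  then show ?thesis unfolding first_jump_def by (simp add: algebra_simps)
qed

lemma first_jump_zero: "first_jump (\<lambda>t Y. 0) t X = 0"
  using first_jump_cmult[of 0 "\<lambda>t Y. 0" t X] by simp

lemma first_jump_sum:
  "(\<And>n. n < (N::nat) \<Longrightarrow> time_cont (\<phi> n)) \<Longrightarrow>
   first_jump (\<lambda>t Y. \<Sum>n<N. \<phi> n t Y) t X = (\<Sum>n<N. first_jump (\<phi> n) t X)"
proof (induction N)
  case 0 then show ?case by (simp add: first_jump_zero)
next
  case (Suc N)
  then show ?case by (simp add: first_jump_add time_cont_sum)
qed

lemma jump_part_Suc_eq_first_jump:
  assumes "t \<ge> 0"
  shows "jump_part s \<gamma> u \<nu>0 \<nu>1 (Suc n) g t X = first_jump (jump_part s \<gamma> u \<nu>0 \<nu>1 n g) t X"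
proof -
  let ?\<phi> = "jump_part s \<gamma> u \<nu>0 \<nu>1 n g"
  let ?h = "\<lambda>r. exp (- rate X * (t - r)) * jump_sum ?\<phi> r X"
  have "jump_part s \<gamma> u \<nu>0 \<nu>1 (Suc n) g t X = integral {0..t} (\<lambda>r. ?h (t - r))"
    by (simp add: jump_sum_def)
  also have "\<dots> = integral {0..t} ?h" by (rule integral_reflect_interval)
  also have "\<dots> = integral {0..t} (\<lambda>r. exp (- rate X * t) * (exp (rate X * r) * jump_sum ?\<phi> r X))"
    by (rule integral_cong) (simp add: algebra_simps flip: exp_add)
  also have "\<dots> = first_jump ?\<phi> t X" by (simp add: first_jump_def)
  finally show ?thesis .
qed

lemma time_cont_jump_part: "time_cont (jump_part s \<gamma> u \<nu>0 \<nu>1 n g)"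
proof (induction n)
  case 0 show ?case unfolding time_cont_def by (auto intro!: continuous_intros)
next
  case (Suc n)
  show ?case unfolding time_cont_def
  proof (intro allI)
    fix Y T
    have "continuous_on {0..T} (\<lambda>t. first_jump (jump_part s \<gamma> u \<nu>0 \<nu>1 n g) t Y)"
      using time_cont_first_jump[OF Suc] unfolding time_cont_def by blast
    then show "continuous_on {0..T} (\<lambda>t. jump_part s \<gamma> u \<nu>0 \<nu>1 (Suc n) g t Y)"
      by (rule continuous_on_eq) (use jump_part_Suc_eq_first_jump in auto)
  qed
qed

definition kolmogorov_backward :: "(real \<Rightarrow> state \<Rightarrow> real) \<Rightarrow> bool" where
  "kolmogorov_backward \<phi> \<longleftrightarrow> (\<forall>Y t. t \<ge> 0 \<longrightarrow>
     ((\<lambda>t. \<phi> t Y) has_real_derivative (jump_sum \<phi> t Y - rate Y * \<phi> t Y)) (at t within {0..}))"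

lemma kolmogorov_backward_DERIV:
  "kolmogorov_backward \<phi> \<Longrightarrow> t \<ge> 0 \<Longrightarrow> 0 \<le> r \<Longrightarrow> r \<le> t \<Longrightarrow>
   ((\<lambda>t. \<phi> t Y) has_real_derivative (jump_sum \<phi> r Y - rate Y * \<phi> r Y)) (at r within {0..t})"
  unfolding kolmogorov_backward_def by (rule has_field_derivative_subset) auto

lemma kolmogorov_backward_time_cont: "kolmogorov_backward \<phi> \<Longrightarrow> time_cont \<phi>"
  unfolding time_cont_def
  by (auto intro!: DERIV_continuous_on kolmogorov_backward_DERIV)

lemma kolmogorov_backward_first_jump:
  assumes "kolmogorov_backward \<phi>" and t: "t \<ge> 0"
  shows "\<phi> t X = exp (- rate X * t) * \<phi> 0 X + first_jump \<phi> t X"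
proof -
  let ?G = "\<lambda>r. exp (rate X * r) * \<phi> r X"
  have "((\<lambda>r. exp (rate X * r) * jump_sum \<phi> r X) has_integral (?G t - ?G 0)) {0..t}"
  proof (rule fundamental_theorem_of_calculus[OF t])
    fix r assume r: "r \<in> {0..t}"
    have "((\<lambda>r. \<phi> r X) has_real_derivative (jump_sum \<phi> r X - rate X * \<phi> r X)) (at r within {0..t})"
      using kolmogorov_backward_DERIV[OF assms(1) t] r by simp
    then have "(?G has_real_derivative (exp (rate X * r) * jump_sum \<phi> r X)) (at r within {0..t})"
      by (auto intro!: derivative_eq_intros simp: algebra_simps)
    then show "(?G has_vector_derivative (exp (rate X * r) * jump_sum \<phi> r X)) (at r within {0..t})"
      by (simp add: has_real_derivative_iff_has_vector_derivative)
  qed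
  then have "first_jump \<phi> t X = exp (- rate X * t) * (exp (rate X * t) * \<phi> t X - \<phi> 0 X)"
    unfolding first_jump_def by (simp add: integral_unique)
  also have "\<dots> = \<phi> t X - exp (- rate X * t) * \<phi> 0 X"
    by (simp add: algebra_simps flip: exp_add)
  finally show ?thesis by simp
qed

abbreviation rate_per_weight :: real where
  "rate_per_weight \<equiv> s + \<gamma> + u * \<nu>1 + u * \<nu>0"

abbreviation growth_rate :: real where
  "growth_rate \<equiv> s + 2 * \<gamma>"

lemma rate_per_weight_nonneg: "rate_per_weight \<ge> 0"
  using s_pos nonneg_rates by simp

lemma growth_rate_pos: "growth_rate > 0"
  using s_pos nonneg_rates by simp

lemma rate_le_state_size: "rate X \<le> rate_per_weight * state_size X"
  using rate_per_weight_nonneg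
  by (cases X) (auto simp: total_rate_Some state_size_def algebra_simps)

lemma jump_sum_1: "jump_sum (\<lambda>t Y. 1) r X = rate X"
  by (simp add: jump_sum_def total_rate_def split_def)

lemma jump_sum_state_size:
  "jump_sum (\<lambda>t Y. state_size Y) r X \<le> (rate X + growth_rate) * state_size X"
proof (cases X)
  case None then show ?thesis using growth_rate_pos by (simp add: jump_sum_def state_size_def)
next
  case (Some T)
  let ?V = "state_size (Some T)"
  have "jump_sum (\<lambda>t Y. state_size Y) r X \<le>
      sum_list (map (\<lambda>p. real (weight_at T p) * (rate_per_weight * ?V + growth_rate)) (leaf_paths T))"
    unfolding jump_sum_def Some sum_list_transitions
  proof (rule sum_list_mono)
    fix p assume p: "p \<in> set (leaf_paths T)"
    have "s * state_size (Some (op_bin T p)) + \<gamma> * state_size (Some (op_ter T p))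
        + u * \<nu>1 * state_size (Some (op_times T p)) + u * \<nu>0 * state_size (op_circ T p)
        \<le> s * (?V + 1) + \<gamma> * (?V + 2) + u * \<nu>1 * ?V + u * \<nu>0 * ?V"
      using state_size_op_bin[OF p] state_size_op_ter[OF p] state_size_op_times[OF p]
        state_size_op_circ[OF p] s_pos nonneg_rates
      by (intro add_mono mult_left_mono) auto
    then show "real (weight_at T p) * (s * state_size (Some (op_bin T p))
        + \<gamma> * state_size (Some (op_ter T p)) + u * \<nu>1 * state_size (Some (op_times T p))
        + u * \<nu>0 * state_size (op_circ T p))
        \<le> real (weight_at T p) * (rate_per_weight * ?V + growth_rate)"
      by (intro mult_left_mono) (simp_all add: algebra_simps)
  qed
  also have "\<dots> = real (total_weight T) * (rate_per_weight * ?V + growth_rate)"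
    by (simp only: sum_list_mult_const sum_list_weight_at_leaf_paths)
  also have "\<dots> = rate X * ?V + growth_rate * real (total_weight T)"
    by (simp add: Some total_rate_Some algebra_simps)
  also have "\<dots> \<le> rate X * ?V + growth_rate * ?V"
    using s_pos nonneg_rates by (intro add_left_mono mult_left_mono) (auto simp: state_size_def)
  finally show ?thesis by (simp add: Some algebra_simps)
qed

definition jump_coeff :: "real \<Rightarrow> real" where
  "jump_coeff t = rate_per_weight / growth_rate * (exp (growth_rate * t) - 1)"

definition jump_count_bound :: "real \<Rightarrow> state \<Rightarrow> real" where
  "jump_count_bound t Y = jump_coeff t * state_size Y"

lemma jump_coeff_nonneg: "t \<ge> 0 \<Longrightarrow> jump_coeff t \<ge> 0"
  unfolding jump_coeff_def using rate_per_weight_nonneg growth_rate_pos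
  by (intro mult_nonneg_nonneg divide_nonneg_pos) auto

lemma jump_count_bound_nonneg: "t \<ge> 0 \<Longrightarrow> jump_count_bound t Y \<ge> 0"
  unfolding jump_count_bound_def using jump_coeff_nonneg state_size_ge_1[of Y] by simp

lemma time_cont_jump_count_bound: "time_cont (\<lambda>t Y. 1 + jump_count_bound t Y)"
  unfolding time_cont_def jump_count_bound_def jump_coeff_def using growth_rate_pos
  by (auto intro!: continuous_intros)

lemma DERIV_jump_coeff:
  "(jump_coeff has_real_derivative rate_per_weight + growth_rate * jump_coeff r) (at r within S)"
proof -
  have "(jump_coeff has_real_derivative rate_per_weight * exp (growth_rate * r)) (at r within S)"
    unfolding jump_coeff_def[abs_def] using growth_rate_pos by (intro DERIV_scaled_exp_minus_1) simp
  moreover have "rate_per_weight * exp (growth_rate * r) = rate_per_weight + growth_rate * jump_coeff r"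
    using growth_rate_pos unfolding jump_coeff_def
    by (simp only: mult.assoc[symmetric] times_divide_eq_right nonzero_mult_div_cancel_left)
       (simp add: algebra_simps)
  ultimately show ?thesis by simp
qed

lemma has_integral_jump_coeff:
  assumes "t \<ge> 0"
  shows "((\<lambda>r. exp (q * r) * (rate_per_weight + (q + growth_rate) * jump_coeff r))
    has_integral exp (q * t) * jump_coeff t) {0..t}"
proof -
  have "((\<lambda>r. exp (q * r) * (rate_per_weight + (q + growth_rate) * jump_coeff r)) has_integral
      exp (q * t) * jump_coeff t - exp (q * 0) * jump_coeff 0) {0..t}"
  proof (rule fundamental_theorem_of_calculus[OF assms])
    fix r
    have "((\<lambda>r. exp (q * r) * jump_coeff r) has_real_derivative
        exp (q * r) * (rate_per_weight + (q + growth_rate) * jump_coeff r)) (at r within {0..t})"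
      by (auto intro!: derivative_eq_intros DERIV_jump_coeff simp: algebra_simps)
    then show "((\<lambda>r. exp (q * r) * jump_coeff r) has_vector_derivative
        exp (q * r) * (rate_per_weight + (q + growth_rate) * jump_coeff r)) (at r within {0..t})"
      by (simp add: has_real_derivative_iff_has_vector_derivative)
  qed
  then show ?thesis by (simp add: jump_coeff_def)
qed

text \<open>jump_count_bound is a supersolution of the recursion defining jump_count below:
  jump_coeff' = growth_rate jump_coeff + rate_per_weight, while by jump_sum_state_size the
  generator maps state_size to at most growth_rate state_size.\<close>
lemma first_jump_jump_count_bound:
  assumes t: "t \<ge> 0"
  shows "first_jump (\<lambda>t Y. 1 + jump_count_bound t Y) t X \<le> jump_count_bound t X"
proof -
  let ?q = "rate X" and ?V = "state_size X"
  let ?g = "\<lambda>r. exp (?q * r) * (rate_per_weight + (?q + growth_rate) * jump_coeff r) * ?V"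
  have "exp (?q * r) * jump_sum (\<lambda>t Y. 1 + jump_count_bound t Y) r X \<le> ?g r"
    if r: "r \<in> {0..t}" for r
  proof -
    have "jump_sum (\<lambda>t Y. 1 + jump_count_bound t Y) r X =
        ?q + jump_coeff r * jump_sum (\<lambda>t Y. state_size Y) r X"
      by (simp add: jump_sum_def jump_count_bound_def split_def distrib_left sum_list_addf
          algebra_simps sum_list_const_mult[symmetric] flip: jump_sum_1[of r X])
    also have "\<dots> \<le> rate_per_weight * ?V + jump_coeff r * ((?q + growth_rate) * ?V)"
      using rate_le_state_size[of X] jump_sum_state_size[of r X] jump_coeff_nonneg[of r] r
      by (intro add_mono mult_left_mono) auto
    finally have "exp (?q * r) * jump_sum (\<lambda>t Y. 1 + jump_count_bound t Y) r X \<le>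
        exp (?q * r) * (rate_per_weight * ?V + jump_coeff r * ((?q + growth_rate) * ?V))"
      by (rule mult_left_mono) simp
    also have "\<dots> = ?g r" by (simp add: algebra_simps)
    finally show ?thesis .
  qed
  moreover note g = has_integral_mult_left[OF has_integral_jump_coeff[OF t, of ?q], where c="?V"]
  ultimately have "integral {0..t} (\<lambda>r. exp (?q * r) * jump_sum (\<lambda>t Y. 1 + jump_count_bound t Y) r X)
      \<le> integral {0..t} ?g"
    by (intro integral_le integrable_first_jump_integrand time_cont_jump_count_bound
        has_integral_integrable[OF g]) auto
  then have "first_jump (\<lambda>t Y. 1 + jump_count_bound t Y) t X \<le>
      exp (- ?q * t) * (exp (?q * t) * jump_coeff t * ?V)"
    unfolding first_jump_def integral_unique[OF g] by (rule mult_left_mono) simp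
  also have "\<dots> = jump_count_bound t X"
    by (simp add: jump_count_bound_def algebra_simps flip: exp_add)
  finally show ?thesis .
qed

text \<open>jump_tail N t X is the probability of at least N jumps up to time t, and jump_count N t X
  the expected number of these jumps truncated at N.\<close>
definition jump_tail :: "nat \<Rightarrow> real \<Rightarrow> state \<Rightarrow> real" where
  "jump_tail N = (first_jump ^^ N) (\<lambda>t Y. 1)"

fun jump_count :: "nat \<Rightarrow> real \<Rightarrow> state \<Rightarrow> real" where
  "jump_count 0 = (\<lambda>t Y. 0)"
| "jump_count (Suc N) = first_jump (\<lambda>t Y. 1 + jump_count N t Y)"

lemma time_cont_jump_tail: "time_cont (jump_tail N)"
  unfolding jump_tail_def by (rule time_cont_first_jump_pow[OF time_cont_const])

lemma time_cont_jump_count: "time_cont (jump_count N)"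
  by (induction N) (auto intro: time_cont_const time_cont_first_jump
      time_cont_add_const)

lemma jump_tail_Suc: "jump_tail (Suc N) = first_jump (jump_tail N)"
  by (simp add: jump_tail_def)

lemma first_jump_1: "t \<ge> 0 \<Longrightarrow> first_jump (\<lambda>t Y. 1) t X = 1 - exp (- rate X * t)"
  using kolmogorov_backward_first_jump[of "\<lambda>t Y. 1" t X]
  by (simp add: kolmogorov_backward_def jump_sum_1)

lemma first_jump_pow_bounds:
  assumes "time_cont \<phi>" and "\<And>t Y. t \<ge> 0 \<Longrightarrow> 0 \<le> \<phi> t Y \<and> \<phi> t Y \<le> 1" and "t \<ge> 0"
  shows "0 \<le> (first_jump ^^ N) \<phi> t X \<and> (first_jump ^^ N) \<phi> t X \<le> jump_tail N t X"
  using assms(3)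
proof (induction N arbitrary: t X)
  case 0 then show ?case using assms(2) by (simp add: jump_tail_def)
next
  case (Suc N)
  have "first_jump (\<lambda>t Y. 0) t X \<le> first_jump ((first_jump ^^ N) \<phi>) t X"
    and "first_jump ((first_jump ^^ N) \<phi>) t X \<le> first_jump (jump_tail N) t X"
    using Suc by (auto intro!: first_jump_mono time_cont_const time_cont_first_jump_pow
        time_cont_jump_tail assms(1))
  then show ?case by (simp add: first_jump_zero jump_tail_Suc)
qed

lemma jump_tail_le_1: "t \<ge> 0 \<Longrightarrow> jump_tail N t X \<le> 1"
proof (induction N arbitrary: t X)
  case 0 then show ?case by (simp add: jump_tail_def)
next
  case (Suc N)
  have "first_jump (jump_tail N) t X \<le> first_jump (\<lambda>t Y. 1) t X"
    using Suc by (auto intro!: first_jump_mono time_cont_jump_tail time_cont_const)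
  then show ?case
    using first_jump_1[OF Suc.prems, of X] exp_gt_zero[of "- rate X * t"]
    unfolding jump_tail_Suc by linarith
qed

lemma jump_tail_nonneg: "t \<ge> 0 \<Longrightarrow> 0 \<le> jump_tail N t X"
  using first_jump_pow_bounds[OF time_cont_const, of 1 t N X] by (simp add: jump_tail_def)

lemma jump_tail_le_jump_count: "t \<ge> 0 \<Longrightarrow> real N * jump_tail N t X \<le> jump_count N t X"
proof (induction N arbitrary: t X)
  case 0 then show ?case by simp
next
  case (Suc N)
  have "real (Suc N) * jump_tail (Suc N) t X = first_jump (\<lambda>t Y. real (Suc N) * jump_tail N t Y) t X"
    by (simp add: jump_tail_Suc first_jump_cmult)
  also have "\<dots> \<le> first_jump (\<lambda>t Y. 1 + jump_count N t Y) t X"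
  proof (rule first_jump_mono)
    fix r Y assume "r \<in> {0..t}"
    then show "real (Suc N) * jump_tail N r Y \<le> 1 + jump_count N r Y"
      using jump_tail_le_1[of r N Y] Suc.IH[of r Y] by (simp add: algebra_simps)
  qed (auto intro: time_cont_cmult
      time_cont_add_const time_cont_jump_tail time_cont_jump_count)
  finally show ?case by simp
qed

lemma jump_count_le_bound: "t \<ge> 0 \<Longrightarrow> jump_count N t X \<le> jump_count_bound t X"
proof (induction N arbitrary: t X)
  case 0 then show ?case using jump_count_bound_nonneg by simp
next
  case (Suc N)
  have "jump_count (Suc N) t X \<le> first_jump (\<lambda>t Y. 1 + jump_count_bound t Y) t X"
    unfolding jump_count.simps
    by (rule first_jump_mono[OF _ time_cont_jump_count_bound])
       (use Suc in \<open>auto intro: time_cont_add_const time_cont_jump_count\<close>)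
  also have "\<dots> \<le> jump_count_bound t X" by (rule first_jump_jump_count_bound) (use Suc in auto)
  finally show ?case .
qed

lemma jump_tail_tendsto_0: "t \<ge> 0 \<Longrightarrow> (\<lambda>N. jump_tail N t X) \<longlonglongrightarrow> 0"
proof (rule tendsto_sandwich[of "\<lambda>N. 0" _ _ "\<lambda>N. jump_count_bound t X / real N"])
  assume t: "t \<ge> 0"
  show "\<forall>\<^sub>F N in sequentially. 0 \<le> jump_tail N t X" using jump_tail_nonneg[OF t] by simp
  have "jump_tail N t X \<le> jump_count_bound t X / real N" if "N \<ge> 1" for N
    using jump_tail_le_jump_count[OF t, of N X] jump_count_le_bound[OF t, of N X] that
    by (simp add: field_simps)
  then show "\<forall>\<^sub>F N in sequentially. jump_tail N t X \<le> jump_count_bound t X / real N"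
    unfolding eventually_sequentially by blast
qed (simp_all add: lim_const_over_n)

lemma kolmogorov_backward_jump_expansion:
  assumes \<phi>: "kolmogorov_backward \<phi>" and "t \<ge> 0"
  shows "\<phi> t X = (\<Sum>n<N. jump_part s \<gamma> u \<nu>0 \<nu>1 n (\<phi> 0) t X) + (first_jump ^^ N) \<phi> t X"
  using \<open>t \<ge> 0\<close>
proof (induction N arbitrary: t X)
  case 0 then show ?case by simp
next
  case (Suc N)
  let ?jp = "\<lambda>n. jump_part s \<gamma> u \<nu>0 \<nu>1 n (\<phi> 0)"
  have cont: "time_cont \<phi>" by (rule kolmogorov_backward_time_cont[OF \<phi>])
  have "first_jump \<phi> t X = first_jump (\<lambda>r Y. (\<Sum>n<N. ?jp n r Y) + (first_jump ^^ N) \<phi> r Y) t X"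
    by (rule first_jump_cong, rule Suc.IH) simp
  also have "\<dots> = (\<Sum>n<N. first_jump (?jp n) t X) + (first_jump ^^ Suc N) \<phi> t X"
    by (simp add: first_jump_add first_jump_sum time_cont_sum time_cont_jump_part
        time_cont_first_jump_pow cont)
  also have "(\<Sum>n<N. first_jump (?jp n) t X) = (\<Sum>n<N. ?jp (Suc n) t X)"
    using jump_part_Suc_eq_first_jump[OF Suc.prems] by simp
  finally have "first_jump \<phi> t X = (\<Sum>n<N. ?jp (Suc n) t X) + (first_jump ^^ Suc N) \<phi> t X" .
  then show ?case
    using kolmogorov_backward_first_jump[OF \<phi> Suc.prems, of X]
    by (simp add: sum.lessThan_Suc_shift del: sum.lessThan_Suc)
qed

text \<open>The remainder of the expansion is at most the probability of at least N jumps, which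
  vanishes since the process does not explode.\<close>
lemma kolmogorov_backward_sums_jump_part:
  assumes \<phi>: "kolmogorov_backward \<phi>" and bounded: "\<And>t Y. t \<ge> 0 \<Longrightarrow> 0 \<le> \<phi> t Y \<and> \<phi> t Y \<le> 1"
    and t: "t \<ge> 0"
  shows "(\<lambda>n. jump_part s \<gamma> u \<nu>0 \<nu>1 n (\<phi> 0) t X) sums \<phi> t X"
proof -
  have "(\<lambda>N. (first_jump ^^ N) \<phi> t X) \<longlonglongrightarrow> 0"
    using first_jump_pow_bounds[OF kolmogorov_backward_time_cont[OF \<phi>] bounded t]
    by (intro tendsto_sandwich[OF _ _ tendsto_const jump_tail_tendsto_0[OF t, of X]]) auto
  then have "(\<lambda>N. \<phi> t X - (first_jump ^^ N) \<phi> t X) \<longlonglongrightarrow> \<phi> t X"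
    using tendsto_diff[OF tendsto_const] by fastforce
  moreover have "\<phi> t X - (first_jump ^^ N) \<phi> t X = (\<Sum>n<N. jump_part s \<gamma> u \<nu>0 \<nu>1 n (\<phi> 0) t X)"
    for N
    using kolmogorov_backward_jump_expansion[OF \<phi> t, of X N] by simp
  ultimately show ?thesis unfolding sums_def by simp
qed

lemma drift_above_1:
  assumes "\<nu>0 + \<nu>1 = 1" and "1 < v" and "v \<le> M"
  shows "drift s \<gamma> u \<nu>0 \<nu>1 v \<le> M * s * (v - 1)"
proof -
  have \<nu>1: "\<nu>1 = 1 - \<nu>0" using assms(1) by simp
  have "drift s \<gamma> u \<nu>0 \<nu>1 v = (v - 1) * (v * (s + \<gamma> * (1 - v)) - u) - u * \<nu>0"
    unfolding drift_def \<nu>1 by (simp add: algebra_simps)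
  moreover have "v * (s + \<gamma> * (1 - v)) - u \<le> M * s"
  proof -
    have "v * (\<gamma> * (1 - v)) \<le> 0"
      using assms(2) nonneg_rates by (intro mult_nonneg_nonpos) auto
    moreover have "v * s \<le> M * s" using assms(3) s_pos by (intro mult_right_mono) auto
    ultimately show ?thesis using nonneg_rates by (simp add: distrib_left)
  qed
  then have "(v - 1) * (v * (s + \<gamma> * (1 - v)) - u) \<le> (v - 1) * (M * s)"
    using assms(2) by (intro mult_left_mono) auto
  moreover have "u * \<nu>0 \<ge> 0" using nonneg_rates by simp
  ultimately show ?thesis by (simp add: algebra_simps)
qed

lemma drift_below_0:
  assumes "\<nu>0 + \<nu>1 = 1" and "v < 0"
  shows "drift s \<gamma> u \<nu>0 \<nu>1 v \<ge> 0"
proof -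
  have \<nu>0: "\<nu>0 = 1 - \<nu>1" using assms(1) by simp
  have "drift s \<gamma> u \<nu>0 \<nu>1 v = - v * ((1 - v) * (s + \<gamma> * (1 - v))) - u * v + u * \<nu>1"
    unfolding drift_def \<nu>0 by (simp add: algebra_simps)
  moreover have "- v * ((1 - v) * (s + \<gamma> * (1 - v))) \<ge> 0"
    using assms(2) s_pos nonneg_rates by (intro mult_nonneg_nonneg) auto
  moreover have "u * v \<le> 0" "u * \<nu>1 \<ge> 0"
    using assms(2) nonneg_rates by (auto intro: mult_nonneg_nonpos)
  ultimately show ?thesis by linarith
qed

lemma drift_solution_unit_interval:
  fixes y :: "real \<Rightarrow> real"
  assumes \<nu>: "\<nu>0 + \<nu>1 = 1" and y0: "y 0 \<in> {0..1}"
    and y': "\<And>t. t \<ge> 0 \<Longrightarrow> (y has_real_derivative drift s \<gamma> u \<nu>0 \<nu>1 (y t)) (at t within {0..})"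
    and t1: "t1 \<ge> 0"
  shows "y t1 \<in> {0..1}"
proof -
  have cont: "continuous_on {0..t1} y"
    by (rule DERIV_continuous_on, rule has_field_derivative_subset[OF y']) auto
  have y'_at: "(y has_real_derivative drift s \<gamma> u \<nu>0 \<nu>1 (y t)) (at t)" if "0 < t" for t
  proof -
    have "(y has_real_derivative drift s \<gamma> u \<nu>0 \<nu>1 (y t)) (at t within {0<..})"
      by (rule has_field_derivative_subset[OF y']) (use that in auto)
    then show ?thesis using at_within_open[of t "{0<..}"] that by simp
  qed
  obtain M where "\<forall>x\<in>y ` {0..t1}. \<bar>x\<bar> \<le> M"
    using compact_imp_bounded[OF compact_continuous_image[OF cont compact_Icc]]
    unfolding bounded_real by blast
  then have M: "y t \<le> M" if "t \<in> {0..t1}" for t using that by force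
  have "y t1 - 1 \<le> 0"
    using t1
  proof (rule nonpos_by_exponential_bound[where w'="\<lambda>t. drift s \<gamma> u \<nu>0 \<nu>1 (y t)" and L="M * s"])
    fix t assume t: "0 < t" "t < t1" "y t - 1 > 0"
    show "((\<lambda>t. y t - 1) has_real_derivative drift s \<gamma> u \<nu>0 \<nu>1 (y t)) (at t)"
      using y'_at[OF t(1)] by (auto intro!: derivative_eq_intros)
    show "drift s \<gamma> u \<nu>0 \<nu>1 (y t) \<le> M * s * (y t - 1)"
      using drift_above_1[OF \<nu>, of "y t" M] M[of t] t by simp
  qed (use y0 cont in \<open>auto intro!: continuous_intros\<close>)
  moreover have "- y t1 \<le> 0"
    using t1
  proof (rule nonpos_by_exponential_bound[where w'="\<lambda>t. - drift s \<gamma> u \<nu>0 \<nu>1 (y t)" and L=0])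
    fix t assume t: "0 < t" "t < t1" "- y t > 0"
    show "((\<lambda>t. - y t) has_real_derivative - drift s \<gamma> u \<nu>0 \<nu>1 (y t)) (at t)"
      using y'_at[OF t(1)] by (auto intro!: derivative_eq_intros)
    show "- drift s \<gamma> u \<nu>0 \<nu>1 (y t) \<le> 0 * - y t"
      using drift_below_0[OF \<nu>, of "y t"] t by simp
  qed (use y0 cont in \<open>auto intro!: continuous_intros\<close>)
  ultimately show ?thesis by simp
qed

lemma kolmogorov_backward_H:
  assumes y': "\<And>t. t \<ge> 0 \<Longrightarrow> (y has_real_derivative drift s \<gamma> u \<nu>0 \<nu>1 (y t)) (at t within {0..})"
  shows "kolmogorov_backward (\<lambda>t X. H X (y t))"
  unfolding kolmogorov_backward_def
proof (intro allI impI)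
  fix X and t :: real assume t: "t \<ge> 0"
  show "((\<lambda>t. H X (y t)) has_real_derivative
      jump_sum (\<lambda>t X. H X (y t)) t X - rate X * H X (y t)) (at t within {0..})"
  proof (cases X)
    case None then show ?thesis by (simp add: jump_sum_def)
  next
    case (Some T)
    have "((\<lambda>t. H_rec T (y t)) has_real_derivative
        dH_rec T (y t) * drift s \<gamma> u \<nu>0 \<nu>1 (y t)) (at t within {0..})"
      by (rule DERIV_chain2[OF DERIV_H_rec y'[OF t]])
    then show ?thesis
      using generator_H_rec[where T=T and y="y t"]
      by (simp add: Some jump_sum_def H_tree_eq_H_rec)
  qed
qed

end

theorem theorem2p25:
  fixes s \<gamma> u \<nu>0 \<nu>1 y0 :: real and y :: "real \<Rightarrow> real"
  assumes "s > 0" and "\<gamma> \<ge> 0" and "u > 0" and "\<nu>0 \<ge> 0" and "\<nu>1 \<ge> 0" and "\<nu>0 + \<nu>1 = 1"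
    and "y0 \<in> {0..1}"
    and "y 0 = y0"
    and "\<And>t. t \<ge> 0 \<Longrightarrow> (y has_real_derivative
            (- y t * (1 - y t) * (s + \<gamma> * (1 - y t)) + u * \<nu>1 * (1 - y t) - u * \<nu>0 * y t))
            (at t within {0..})"
  shows "(\<forall>X t. t \<ge> 0 \<longrightarrow> H X (y t) = expect s \<gamma> u \<nu>0 \<nu>1 (\<lambda>Z. H Z y0) t X)
       \<and> (\<forall>t. t \<ge> 0 \<longrightarrow> y t = expect s \<gamma> u \<nu>0 \<nu>1 (\<lambda>Z. H Z y0) t (Some (Leaf 1)))"
proof -
  interpret asg_rates s \<gamma> u \<nu>0 \<nu>1 using assms by unfold_locales auto
  have y': "(y has_real_derivative drift s \<gamma> u \<nu>0 \<nu>1 (y t)) (at t within {0..})" if "t \<ge> 0" for t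
    using assms(9)[OF that] by (simp add: drift_def)
  have duality: "H X (y t) = expect s \<gamma> u \<nu>0 \<nu>1 (\<lambda>Z. H Z y0) t X" if t: "t \<ge> 0" for X t
  proof -
    have "(\<lambda>n. jump_part s \<gamma> u \<nu>0 \<nu>1 n (\<lambda>Z. H Z (y 0)) t X) sums H X (y t)"
      using kolmogorov_backward_sums_jump_part[OF kolmogorov_backward_H[OF y'] _ t]
        H_unit_interval drift_solution_unit_interval[OF assms(6) _ y'] assms(7,8)
      by simp
    then show ?thesis unfolding expect_def assms(8) by (simp add: sums_iff)
  qed
  moreover have "H (Some (Leaf 1)) v = v" for v by (simp add: H_tree_eq_H_rec)
  ultimately show ?thesis by metis
qed

end
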